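(* Let $n\ge0$ be an integer and $n_1=\lceil n/2\rceil$. If $g\in K a(\varpi^{n_1})$, then $t(g)=\min(n_1-2l(g),-n_1)$.
   Context: $F$ is a non-archimedean local field of characteristic $0$ with ring of integers $\mathfrak{o}$, maximal ideal $\mathfrak{p}$, uniformizer $\varpi$; $U_j=\{x\in\mathfrak{o}^\times: v(x-1)\ge j\}$. $G=\mathrm{GL}_2(F)$, $K=\mathrm{GL}_2(\mathfrak{o})$, $K_1(\mathfrak{p}^n)=K\cap\begin{pmatrix}1+\mathfrak{p}^n&\mathfrak{o}\\\mathfrak{p}^n&\mathfrak{o}\end{pmatrix}$, $w=\begin{pmatrix}0&1\\-1&0\end{pmatrix}$, $a(y)=\mathrm{diag}(y,1)$, $n(x)=\begin{pmatrix}1&x\\0&1\end{pmatrix}$, $Z$ the center, $N=\{n(x)\}$. There is a disjoint decomposition $G=\bigsqcup_{t\in\mathbb{Z}}\bigsqcup_{0\le l\le n}\bigsqcup_{v\in\mathfrak{o}^\times/U_{\min(l,n-l)}}ZN a(\varpi^t)wn(\varpi^{-l}v)K_1(\mathfrak{p}^n)$; for $g\in G$, $t(g)$ and $l(g)$ are the unique integers with $0\le l(g)\le n$ and $g\in ZNa(\varpi^{t(g)})wn(\varpi^{-l(g)}v)K_1(\mathfrak{p}^n)$ for some $v\in\mathfrak{o}^\times$. *)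

theory Defs
  imports Main
begin

(* 2x2 matrices over a field: M a b c d = [[a,b],[c,d]] *)
datatype 'a m2 = M 'a 'a 'a 'a

fun mmul :: "'a::comm_ring_1 m2 \<Rightarrow> 'a m2 \<Rightarrow> 'a m2" (infixl "\<cdot>" 70) where
  "M a b c d \<cdot> M e f g h = M (a*e + b*g) (a*f + b*h) (c*e + d*g) (c*f + d*h)"

fun mdet :: "'a::comm_ring_1 m2 \<Rightarrow> 'a" where
  "mdet (M a b c d) = a*d - b*c"

(* valuation lower bound: val x \<ge> j, with the convention v(0) = +infinity *)
definition vge :: "('a::field \<Rightarrow> int) \<Rightarrow> 'a \<Rightarrow> int \<Rightarrow> bool" where
  "vge val x j \<longleftrightarrow> x = 0 \<or> val x \<ge> j"

definition nonarch_local_field :: "('a::field_char_0 \<Rightarrow> int) \<Rightarrow> 'a \<Rightarrow> bool" where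
  "nonarch_local_field val pi \<longleftrightarrow>
     (\<forall>x y. x \<noteq> 0 \<longrightarrow> y \<noteq> 0 \<longrightarrow> val (x*y) = val x + val y) \<and>
     (\<forall>x y. x \<noteq> 0 \<longrightarrow> y \<noteq> 0 \<longrightarrow> x + y \<noteq> 0 \<longrightarrow> val (x+y) \<ge> min (val x) (val y)) \<and>
     pi \<noteq> 0 \<and> val pi = 1 \<and>
     (\<forall>X::nat \<Rightarrow> 'a. (\<forall>j. \<exists>N. \<forall>p\<ge>N. \<forall>q\<ge>N. vge val (X p - X q) j)
         \<longrightarrow> (\<exists>L. \<forall>j. \<exists>N. \<forall>p\<ge>N. vge val (X p - L) j)) \<and>
     (\<exists>S. finite S \<and> (\<forall>s\<in>S. vge val s 0) \<and>
          (\<forall>x. vge val x 0 \<longrightarrow> (\<exists>s\<in>S. vge val (x - s) 1)))"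

definition ounit :: "('a::field \<Rightarrow> int) \<Rightarrow> 'a \<Rightarrow> bool" where
  "ounit val x \<longleftrightarrow> x \<noteq> 0 \<and> val x = 0"

(* K = GL_2(o) *)
definition Kmax :: "('a::field \<Rightarrow> int) \<Rightarrow> 'a m2 set" where
  "Kmax val = {M a b c d | a b c d. vge val a 0 \<and> vge val b 0 \<and> vge val c 0 \<and> vge val d 0
                 \<and> ounit val (a*d - b*c)}"

definition K1 :: "('a::field \<Rightarrow> int) \<Rightarrow> nat \<Rightarrow> 'a m2 set" where
  "K1 val n = {M a b c d | a b c d. M a b c d \<in> Kmax val \<and> vge val (a - 1) (int n) \<and> vge val c (int n)}"

definition wmat :: "'a::comm_ring_1 m2" where "wmat = M 0 1 (-1) 0"
definition amat :: "'a::comm_ring_1 \<Rightarrow> 'a m2" where "amat y = M y 0 0 1"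
definition nmat :: "'a::comm_ring_1 \<Rightarrow> 'a m2" where "nmat x = M 1 x 0 1"
definition zmat :: "'a::comm_ring_1 \<Rightarrow> 'a m2" where "zmat z = M z 0 0 z"

end

theory Submission
  imports Defs
begin

text \<open>Write \<open>k = (p q; r s)\<close>, \<open>m = \<lceil>n/2\<rceil>\<close> and compare the two expressions for \<open>g\<close>.
  Their determinants give \<open>m = 2 v(z) + t\<close>.  Their bottom rows give
  \<open>(r\<pi>\<^sup>m, s) = -z (1, \<pi>\<^sup>-\<^sup>l u) k\<^sub>1\<close>; multiplying by the adjugate of \<open>k\<^sub>1\<close>, whose diagonal
  entries are units, and using that \<open>r\<close> or \<open>s\<close> is a unit, the strict triangle inequality
  yields \<open>v(z) = max(l, m)\<close>.  Hence \<open>t = m - 2 max(l, m) = min(m - 2l, -m)\<close>.\<close>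

locale nonarch_valuation =
  fixes val :: "'a::field \<Rightarrow> int"
  assumes val_mult: "\<And>x y. x \<noteq> 0 \<Longrightarrow> y \<noteq> 0 \<Longrightarrow> val (x * y) = val x + val y"
    and val_add: "\<And>x y. x \<noteq> 0 \<Longrightarrow> y \<noteq> 0 \<Longrightarrow> x + y \<noteq> 0 \<Longrightarrow> min (val x) (val y) \<le> val (x + y)"
begin

lemma val_one [simp]: "val 1 = 0"
  using val_mult[of 1 1] by simp

lemma val_uminus [simp]: "val (- x) = val x"
proof (cases "x = 0")
  case False
  have "val (-1) = 0" using val_mult[of "-1" "-1"] by simp
  then show ?thesis using val_mult[of "-1" x] False by simp
qed simp

lemma val_inverse: "x \<noteq> 0 \<Longrightarrow> val (inverse x) = - val x"
  using val_mult[of x "inverse x"] by simp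

lemma val_power: "x \<noteq> 0 \<Longrightarrow> val (x ^ k) = int k * val x"
  by (induction k) (auto simp: val_mult algebra_simps)

lemma val_power_int: "x \<noteq> 0 \<Longrightarrow> val (x powi t) = t * val x"
  by (auto simp: power_int_def val_power val_inverse power_inverse[symmetric])

lemma vge_nonzero_iff: "x \<noteq> 0 \<Longrightarrow> vge val x j \<longleftrightarrow> j \<le> val x"
  by (simp add: vge_def)

lemma vge_val: "vge val x (val x)"
  by (simp add: vge_def)

lemma vge_mono: "vge val x i \<Longrightarrow> j \<le> i \<Longrightarrow> vge val x j"
  by (auto simp: vge_def)

lemma vge_uminus: "vge val x i \<Longrightarrow> vge val (- x) i"
  by (simp add: vge_def)

lemma vge_add: "vge val x i \<Longrightarrow> vge val y i \<Longrightarrow> vge val (x + y) i"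
  unfolding vge_def using val_add[of x y] by force

lemma vge_diff: "vge val x i \<Longrightarrow> vge val y i \<Longrightarrow> vge val (x - y) i"
  using vge_add[of x i "- y"] vge_uminus[of y i] by simp

lemma vge_mult: "vge val x i \<Longrightarrow> vge val y j \<Longrightarrow> vge val (x * y) (i + j)"
  unfolding vge_def using val_mult[of x y] by (cases "x = 0 \<or> y = 0") auto

lemma val_add_eq:
  assumes "x \<noteq> 0" "vge val y (val x + 1)"
  shows "x + y \<noteq> 0 \<and> val (x + y) = val x"
proof (cases "y = 0")
  case False
  then have y: "val x < val y" using assms by (simp add: vge_def)
  have xy: "x + y \<noteq> 0"
  proof
    assume "x + y = 0"
    then have "y = - x" by (simp add: add_eq_0_iff)
    with y show False by simp
  qed
  have "min (val (x + y)) (val (- y)) \<le> val x"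
    using val_add[of "x + y" "- y"] xy False assms(1) by simp
  with y have "val (x + y) \<le> val x" by simp
  moreover have "val x \<le> val (x + y)" using val_add[OF assms(1) False xy] y by simp
  ultimately show ?thesis using xy by simp
qed (use assms in simp)

lemma ounit_mult: "ounit val x \<Longrightarrow> ounit val y \<Longrightarrow> ounit val (x * y)"
  by (simp add: ounit_def val_mult)

lemma not_ounit_vge_one: "vge val x 0 \<Longrightarrow> \<not> ounit val x \<Longrightarrow> vge val x 1"
  by (auto simp: vge_def ounit_def)

lemma ounit_det_imp_lower_row:
  assumes "vge val p 0" "vge val q 0" "vge val r 0" "vge val s 0" "ounit val (p * s - q * r)"
  shows "ounit val r \<or> ounit val s"
proof (rule ccontr)
  assume "\<not> ?thesis"
  then have "vge val r 1" "vge val s 1" using assms not_ounit_vge_one by auto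
  then have "vge val (p * s - q * r) 1"
    using vge_diff vge_mult[OF assms(1)] vge_mult[OF assms(2)] by fastforce
  with assms(5) show False by (simp add: vge_def ounit_def)
qed

text \<open>\<open>ad\<close> is congruent to the determinant modulo the maximal ideal.\<close>

lemma ounit_det_imp_diagonal:
  assumes "vge val a 0" "vge val b 0" "vge val c 1" "vge val d 0" "ounit val (a * d - b * c)"
  shows "ounit val a \<and> ounit val d"
proof -
  have "vge val (b * c) (val (a * d - b * c) + 1)"
    using vge_mult[OF assms(2,3)] assms(5) by (simp add: ounit_def)
  then have "a * d \<noteq> 0" "val (a * d) = 0"
    using val_add_eq[of "a * d - b * c" "b * c"] assms(5) by (auto simp: ounit_def)
  with assms(1,4) show ?thesis by (auto simp: ounit_def vge_def val_mult)
qed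

lemma ounit_mdet_Kmax: "k \<in> Kmax val \<Longrightarrow> ounit val (mdet k)"
  by (auto simp: Kmax_def)

end

lemma nonarch_local_field_valuation:
  "nonarch_local_field val \<pi> \<Longrightarrow> nonarch_valuation val"
  by unfold_locales (auto simp: nonarch_local_field_def)

lemma mdet_mmul: "mdet (A \<cdot> B) = mdet A * mdet B"
  by (cases A; cases B) (simp add: algebra_simps)

lemma mdet_Bruhat_word:
  "mdet (zmat z \<cdot> nmat x \<cdot> amat P \<cdot> wmat \<cdot> nmat y \<cdot> k) = z\<^sup>2 * P * mdet k"
  unfolding mdet_mmul by (simp add: zmat_def nmat_def amat_def wmat_def algebra_simps power2_eq_square)

lemma lower_row_Bruhat_word:
  assumes "M p q r s \<cdot> amat \<mu> = zmat z \<cdot> nmat x \<cdot> amat P \<cdot> wmat \<cdot> nmat y \<cdot> M a b c d"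
  shows "r * \<mu> = - z * (a + y * c)" "s = - z * (b + y * d)"
  using assms by (simp_all add: amat_def zmat_def nmat_def wmat_def algebra_simps)

context nonarch_valuation
begin

lemma val_lower_row_scalar_Kmax:
  assumes k: "M p q r s \<in> Kmax val" and k1: "M a b c d \<in> Kmax val"
    and z: "z \<noteq> 0" and y: "vge val y 0"
    and row: "r = - z * (a + y * c)" "s = - z * (b + y * d)"
  shows "val z = 0"
proof -
  obtain vp: "vge val p 0" and vq: "vge val q 0" and vr: "vge val r 0" and vs: "vge val s 0"
    and dk: "ounit val (p * s - q * r)"
    using k by (auto simp: Kmax_def)
  obtain va: "vge val a 0" and vb: "vge val b 0" and vc: "vge val c 0" and vd: "vge val d 0"
    and D: "ounit val (a * d - b * c)"
    using k1 by (auto simp: Kmax_def)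
  have "r * d - s * c = - z * (a * d - b * c)" unfolding row by (simp add: algebra_simps)
  moreover have "vge val (r * d - s * c) 0"
    using vge_diff vge_mult[OF vr vd] vge_mult[OF vs vc] by fastforce
  ultimately have "0 \<le> val z" using z D by (simp add: ounit_def vge_def val_mult)
  moreover have "val z \<le> 0"
  proof -
    have "vge val (a + y * c) 0" "vge val (b + y * d) 0"
      using vge_add va vb vge_mult[OF y vc] vge_mult[OF y vd] by fastforce+
    then show ?thesis
      using ounit_det_imp_lower_row[OF vp vq vr vs dk] z row
      by (auto simp: ounit_def vge_def val_mult)
  qed
  ultimately show ?thesis by simp
qed

lemma val_lower_row_scalar_K1:
  assumes k: "M p q r s \<in> Kmax val" and k1: "M a b c d \<in> K1 val n"
    and \<nu>: "\<nu> \<noteq> 0" and \<mu>: "\<mu> \<noteq> 0" "1 \<le> val \<mu>" "val \<mu> \<le> int n"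
    and z: "z \<noteq> 0" and u: "ounit val u" "\<nu> * y = u"
    and row: "r * \<mu> = - z * (a + y * c)" "s = - z * (b + y * d)"
  shows "val z = max (val \<nu>) (val \<mu>)"
proof -
  obtain vp: "vge val p 0" and vq: "vge val q 0" and vr: "vge val r 0" and vs: "vge val s 0"
    and dk: "ounit val (p * s - q * r)"
    using k by (auto simp: Kmax_def)
  obtain va: "vge val a 0" and vb: "vge val b 0" and vc: "vge val c (int n)" and vd: "vge val d 0"
    and D: "ounit val (a * d - b * c)"
    using k1 by (auto simp: K1_def Kmax_def)
  define D where "D = a * d - b * c"
  have ua: "ounit val a" and ud: "ounit val d"
    using ounit_det_imp_diagonal[OF va vb vge_mono[OF vc] vd D] \<mu> by auto
  have ir\<mu>: "vge val (r * \<mu>) (val \<mu>)" using vge_mult[OF vr vge_val] by simp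
  have eq1: "r * \<mu> * d - s * c = - z * D"
    unfolding row D_def by (simp add: algebra_simps)
  have eq2: "\<nu> * (s * a - r * \<mu> * b) = - z * u * D"
    unfolding row D_def u(2)[symmetric] by (simp add: algebra_simps)
  have vD: "val (- z * D) = val z" "val (- z * u * D) = val z" "- z * D \<noteq> 0" "- z * u * D \<noteq> 0"
    using z u D by (simp_all add: D_def ounit_def val_mult)
  consider "ounit val s" | "ounit val r" "vge val s 1"
    using ounit_det_imp_lower_row[OF vp vq vr vs dk] not_ounit_vge_one[OF vs] by blast
  then show ?thesis
  proof cases
    case 1
    have sa: "s * a \<noteq> 0" "val (s * a) = 0"
      using ounit_mult[OF 1 ua] by (simp_all add: ounit_def)
    have "vge val (- (r * \<mu> * b)) (val (s * a) + 1)"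
      using vge_mono[OF vge_uminus[OF vge_mult[OF ir\<mu> vb]], of 1] sa(2) \<mu>(2) by simp
    then have "s * a + - (r * \<mu> * b) \<noteq> 0 \<and> val (s * a + - (r * \<mu> * b)) = val (s * a)"
      by (rule val_add_eq[OF sa(1)])
    then have "val (s * a - r * \<mu> * b) = 0" "s * a - r * \<mu> * b \<noteq> 0"
      using sa(2) by simp_all
    then have "val (\<nu> * (s * a - r * \<mu> * b)) = val \<nu>" using \<nu> by (simp add: val_mult)
    then have "val z = val \<nu>" using eq2 vD by simp
    moreover have "vge val (r * \<mu> * d - s * c) (val \<mu>)"
    proof (rule vge_diff)
      show "vge val (r * \<mu> * d) (val \<mu>)" using vge_mult[OF ir\<mu> vd] by simp
      show "vge val (s * c) (val \<mu>)" using vge_mono[OF vge_mult[OF vs vc]] \<mu>(3) by simp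
    qed
    then have "val \<mu> \<le> val z" using eq1 vD vge_nonzero_iff by metis
    ultimately show ?thesis by simp
  next
    case 2
    have r\<mu>d: "r * \<mu> * d \<noteq> 0" "val (r * \<mu> * d) = val \<mu>"
      using 2(1) ud \<mu>(1) by (simp_all add: ounit_def val_mult)
    have "vge val (- (s * c)) (val (r * \<mu> * d) + 1)"
      using vge_mono[OF vge_uminus[OF vge_mult[OF 2(2) vc]], of "val \<mu> + 1"] r\<mu>d(2) \<mu>(3)
      by simp
    then have "r * \<mu> * d + - (s * c) \<noteq> 0 \<and> val (r * \<mu> * d + - (s * c)) = val (r * \<mu> * d)"
      by (rule val_add_eq[OF r\<mu>d(1)])
    then have "val z = val \<mu>" using eq1 vD r\<mu>d(2) by simp
    moreover have "val \<nu> \<le> val z"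
    proof -
      have "vge val (s * a - r * \<mu> * b) 0"
      proof (rule vge_diff)
        show "vge val (s * a) 0" using vge_mult[OF vs va] by simp
        show "vge val (r * \<mu> * b) 0" using vge_mono[OF vge_mult[OF ir\<mu> vb]] \<mu>(2) by simp
      qed
      moreover have "s * a - r * \<mu> * b \<noteq> 0" using eq2 vD(4) by auto
      ultimately have "val \<nu> \<le> val (\<nu> * (s * a - r * \<mu> * b))"
        using \<nu> by (simp add: vge_def val_mult)
      then show ?thesis using eq2 vD by simp
    qed
    ultimately show ?thesis by simp
  qed
qed

end

theorem lemma2p3:
  fixes val :: "'a::field_char_0 \<Rightarrow> int" and \<pi> :: 'a and n :: nat and g :: "'a m2"
    and z x u :: 'a and t :: int and l :: nat and k k1 :: "'a m2"
  assumes F: "nonarch_local_field val \<pi>"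
    and gK: "k \<in> Kmax val" "g = k \<cdot> amat (\<pi> ^ ((n + 1) div 2))"
    and rep: "z \<noteq> 0" "ounit val u" "l \<le> n" "k1 \<in> K1 val n"
      "g = zmat z \<cdot> nmat x \<cdot> amat (\<pi> powi t) \<cdot> wmat \<cdot> nmat (inverse (\<pi> ^ l) * u) \<cdot> k1"
  shows "t = min (int ((n + 1) div 2) - 2 * int l) (- int ((n + 1) div 2))"
proof -
  interpret nonarch_valuation val using F by (rule nonarch_local_field_valuation)
  have \<pi>: "\<pi> \<noteq> 0" "val \<pi> = 1" using F by (auto simp: nonarch_local_field_def)
  define m where "m = (n + 1) div 2"
  define y where "y = inverse (\<pi> ^ l) * u"
  obtain p q r s a b c d where k: "k = M p q r s" and k1: "k1 = M a b c d"
    by (cases k; cases k1)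
  have eq: "k \<cdot> amat (\<pi> ^ m) = zmat z \<cdot> nmat x \<cdot> amat (\<pi> powi t) \<cdot> wmat \<cdot> nmat y \<cdot> k1"
    using gK(2) rep(5) by (simp add: m_def y_def)
  have k1K: "k1 \<in> Kmax val" using rep(4) by (auto simp: K1_def)
  have "mdet k * \<pi> ^ m = z\<^sup>2 * \<pi> powi t * mdet k1"
    using arg_cong[OF eq, of mdet] unfolding mdet_Bruhat_word mdet_mmul[of k]
    by (simp add: amat_def)
  moreover have "val (mdet k * \<pi> ^ m) = int m"
    using ounit_mdet_Kmax[OF gK(1)] \<pi> by (simp add: ounit_def val_mult val_power)
  moreover have "val (z\<^sup>2 * \<pi> powi t * mdet k1) = 2 * val z + t"
    using ounit_mdet_Kmax[OF k1K] rep(1) \<pi> by (simp add: ounit_def val_mult val_power val_power_int)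
  ultimately have det: "int m = 2 * val z + t" by simp
  note row = lower_row_Bruhat_word[OF eq[unfolded k k1]]
  have "val z = max (int l) (int m)"
  proof (cases "n = 0")
    case True
    then show ?thesis
      using val_lower_row_scalar_Kmax[of p q r s a b c d z y] gK(1) rep row k k1
      by (simp add: m_def y_def K1_def ounit_def vge_def)
  next
    case False
    then show ?thesis
      using val_lower_row_scalar_K1[of p q r s a b c d n "\<pi> ^ l" "\<pi> ^ m" z u y] gK(1) rep row k k1 \<pi>
      by (simp add: m_def y_def val_power)
  qed
  with det show ?thesis unfolding m_def by simp
qed

end
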